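(* Let $U$ be the $\mathrm{mcG}(q)$ solution of $\dot u=f(u,t)$, $u(0)=u_0$, with residual $R_i(U,t)=\dot U_i(t)-f_i(U(t),t)$, and let $\tilde R$ be the local $L^2$-projection of $R$ onto the trial space, i.e. $\tilde R_i(U,\cdot)|_{I_{ij}}$ is the $L^2(I_{ij})$-orthogonal projection of $R_i(U,\cdot)|_{I_{ij}}$ onto the polynomials of degree $\le q_{ij}$ on $I_{ij}$, for $j=1,\dots,M_i$, $i=1,\dots,N$. Then every $\tilde R_i(U,\cdot)|_{I_{ij}}$ is a (possibly zero) scalar multiple of the Legendre polynomial of degree $q_{ij}$ on $I_{ij}$, i.e. of $t\mapsto P_{q_{ij}}\big(2(t-t_{i,j-1})/k_{ij}-1\big)$.
   Context: $f:\mathbb{R}^N\times(0,T]\to\mathbb{R}^N$ is bounded and Lipschitz in $u$. For each component $i$: partition $0=t_{i0}<\dots<t_{iM_i}=T$, $I_{ij}=(t_{i,j-1},t_{ij}]$, $k_{ij}=t_{ij}-t_{i,j-1}$, degrees $q_{ij}\ge1$. The $\mathrm{mcG}(q)$ solution $U$: each $U_i$ continuous on $[0,T]$, $U_i|_{I_{ij}}$ a polynomial of degree $\le q_{ij}$, $U(0)=u_0$, and $\int_{I_{ij}}\dot U_iv\,dt=\int_{I_{ij}}f_i(U,t)v\,dt$ for all polynomials $v$ of degree $\le q_{ij}-1$ on $I_{ij}$ (exact integration). $P_q$ is the degree-$q$ Legendre polynomial on $[-1,1]$. *)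

theory Defs
  imports "HOL-Analysis.Analysis" "HOL-Computational_Algebra.Polynomial"
begin

definition legendre_poly :: "nat \<Rightarrow> real poly" where
  "legendre_poly n = smult (1 / (2 ^ n * fact n)) ((pderiv ^^ n) ([:-1, 0, 1:] ^ n))"

definition is_L2_poly_proj :: "real \<Rightarrow> real \<Rightarrow> nat \<Rightarrow> (real \<Rightarrow> real) \<Rightarrow> real poly \<Rightarrow> bool" where
  "is_L2_poly_proj a b n g r \<longleftrightarrow> degree r \<le> n \<and>
     (\<forall>v::real poly. degree v \<le> n \<longrightarrow>
        integral {a..b} (\<lambda>s. (g s - poly r s) * poly v s) = 0)"

end

theory Submission
  imports Defs
begin

text \<open>On a subinterval I of length k, the Galerkin condition says that the residual R is
  L2(I)-orthogonal to all polynomials of degree q - 1; since R - Rt is orthogonal to all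
  polynomials of degree q, so is the projection Rt. A polynomial of degree at most q that is
  orthogonal to all polynomials of lower degree is unique up to a scalar factor, and
  P_q(2(t - t0)/k - 1) is such a polynomial: by Rodrigues' formula it is a q-th derivative of
  z^q, where z vanishes at both endpoints of I, so q integrations by parts against a
  polynomial of degree < q leave only vanishing boundary terms.\<close>

lemma poly_integrable_on: "poly p integrable_on {a..b :: real}"
  by (intro integrable_continuous_interval continuous_on_poly continuous_on_id)

lemma integral_poly_add:
  fixes p q :: "real poly"
  shows "integral {a..b} (poly (p + q)) = integral {a..b} (poly p) + integral {a..b} (poly q)"
  using integral_add[OF poly_integrable_on poly_integrable_on, of a b p q]
  by (simp add: poly_add [abs_def])

lemma integral_poly_diff:
  fixes p q :: "real poly"
  shows "integral {a..b} (poly (p - q)) = integral {a..b} (poly p) - integral {a..b} (poly q)"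
  using integral_diff[OF poly_integrable_on poly_integrable_on, of a b p q]
  by (simp add: poly_diff [abs_def])

lemma integral_poly_smult:
  "integral {a..b} (poly (smult c p)) = c * integral {a..b} (poly (p :: real poly))"
  using integral_mult_right[of "{a..b}" c "poly p"] by (simp add: poly_smult [abs_def])

lemma integral_poly_pderiv:
  fixes p :: "real poly"
  assumes "a \<le> b"
  shows "integral {a..b} (poly (pderiv p)) = poly p b - poly p a"
proof (rule integral_unique, rule fundamental_theorem_of_calculus[OF assms])
  show "(poly p has_vector_derivative poly (pderiv p) x) (at x within {a..b})" for x
    by (simp flip: has_real_derivative_iff_has_vector_derivative add: has_field_derivative_at_within)
qed

lemma integral_poly_pderiv_mult_vanishing:
  fixes w v :: "real poly"
  assumes "a \<le> b" and "poly w a = 0" and "poly w b = 0"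
  shows "integral {a..b} (poly (pderiv w * v)) = - integral {a..b} (poly (w * pderiv v))"
proof -
  have "integral {a..b} (poly (w * pderiv v)) + integral {a..b} (poly (pderiv w * v))
        = integral {a..b} (poly (pderiv (w * v)))"
    by (simp add: pderiv_mult integral_poly_add mult.commute)
  also have "\<dots> = 0"
    using assms by (simp add: integral_poly_pderiv)
  finally show ?thesis by linarith
qed

lemma power_dvd_pderiv_funpow_power:
  fixes z :: "'a::{comm_semiring_1,semiring_no_zero_divisors} poly"
  assumes "m \<le> k"
  shows "z ^ (k - m) dvd (pderiv ^^ m) (z ^ k)"
  using assms
proof (induction m)
  case 0
  show ?case by simp
next
  case (Suc m)
  then obtain s where "(pderiv ^^ m) (z ^ k) = z ^ (k - m) * s"
    by (auto elim: dvdE)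
  moreover have "k - m = Suc (k - Suc m)"
    using Suc.prems by simp
  ultimately have s: "(pderiv ^^ m) (z ^ k) = z ^ Suc (k - Suc m) * s"
    by simp
  have "(pderiv ^^ Suc m) (z ^ k) =
        z ^ (k - Suc m) * (z * pderiv s + smult (of_nat (Suc (k - Suc m))) (s * pderiv z))"
    by (simp add: s pderiv_mult pderiv_power_Suc algebra_simps del: power_Suc) (simp add: algebra_simps)
  then show ?case by simp
qed

text \<open>Integrate by parts m times: every boundary term vanishes because z divides the
  lower derivatives of z^k.\<close>
lemma pderiv_funpow_power_orthogonal:
  fixes z v :: "real poly"
  assumes "a \<le> b" and "poly z a = 0" and "poly z b = 0" and "m \<le> k" and "degree v < m"
  shows "integral {a..b} (poly ((pderiv ^^ m) (z ^ k) * v)) = 0"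
  using assms(4,5)
proof (induction m arbitrary: v)
  case 0
  then show ?case by simp
next
  case (Suc m)
  define w where "w = (pderiv ^^ m) (z ^ k)"
  have "z dvd z ^ (k - m)"
    using Suc.prems by (simp add: dvd_power)
  also have "z ^ (k - m) dvd w"
    using power_dvd_pderiv_funpow_power[of m k z] Suc.prems by (simp add: w_def)
  finally have "z dvd w" .
  then have "poly w a = 0" "poly w b = 0"
    using assms(2,3) by (auto elim!: dvdE)
  moreover have "integral {a..b} (poly (w * pderiv v)) = 0"
  proof (cases "degree v = 0")
    case True
    then show ?thesis by (simp add: pderiv_eq_0_iff[symmetric] poly_0 [abs_def])
  next
    case False
    then have "degree (pderiv v) < m"
      using Suc.prems by (simp add: degree_pderiv)
    moreover have "m \<le> k"
      using Suc.prems by simp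
    ultimately show ?thesis
      unfolding w_def by (intro Suc.IH)
  qed
  ultimately have "integral {a..b} (poly (pderiv w * v)) = 0"
    by (simp add: integral_poly_pderiv_mult_vanishing[OF assms(1)])
  then show ?case
    by (simp add: w_def del: poly_mult)
qed

lemma poly_eq_0_if_integral_square_eq_0:
  fixes p :: "real poly"
  assumes "a < b" and "integral {a..b} (poly (p * p)) = 0"
  shows "p = 0"
proof -
  have "integral {a..b} (\<lambda>x. poly p x * poly p x) = 0"
    using assms(2) by (simp add: poly_mult [abs_def])
  moreover have "continuous_on {a..b} (\<lambda>x. poly p x * poly p x)"
    by (intro continuous_intros)
  ultimately have "\<forall>x\<in>{a..b}. poly p x * poly p x = 0"
    using assms(1) by (subst (asm) integral_eq_0_iff) auto
  then have "{a..b} \<subseteq> {x. poly p x = 0}"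
    by auto
  then show ?thesis
    using poly_roots_finite[of p] infinite_Icc[OF assms(1)] finite_subset by blast
qed

text \<open>Q - c L, with c matching the leading coefficients, has lower degree and is
  therefore orthogonal to itself.\<close>
lemma orthogonal_lower_degree_poly_eq_smult:
  fixes L Q :: "real poly"
  assumes "a < b" and "L \<noteq> 0" and "degree Q \<le> degree L"
    and L_orth: "\<And>v. degree v < degree L \<Longrightarrow> integral {a..b} (poly (L * v)) = 0"
    and Q_orth: "\<And>v. degree v < degree L \<Longrightarrow> integral {a..b} (poly (Q * v)) = 0"
  shows "\<exists>c. Q = smult c L"
proof -
  define c where "c = coeff Q (degree L) / lead_coeff L"
  define D where "D = Q - smult c L"
  have "D = 0"
  proof (rule ccontr)
    assume "D \<noteq> 0"
    have "coeff D (degree L) = 0"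
      using assms(2) by (simp add: D_def c_def)
    moreover have "degree D \<le> degree L"
      unfolding D_def using assms(3) by (simp add: degree_diff_le)
    ultimately have "degree D < degree L"
      using \<open>D \<noteq> 0\<close> by (metis le_neq_implies_less leading_coeff_0_iff)
    have "D * D = Q * D - smult c (L * D)"
      by (subst (1) D_def) (simp add: left_diff_distrib)
    then have "integral {a..b} (poly (D * D))
               = integral {a..b} (poly (Q * D)) - c * integral {a..b} (poly (L * D))"
      by (simp add: integral_poly_diff integral_poly_smult)
    also have "\<dots> = 0"
      using L_orth Q_orth \<open>degree D < degree L\<close> by simp
    finally have "integral {a..b} (poly (D * D)) = 0" .
    then show False
      using poly_eq_0_if_integral_square_eq_0[OF assms(1)] \<open>D \<noteq> 0\<close> by blast
  qed
  then show ?thesis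
    by (auto simp: D_def)
qed

lemma pcompose_power: "pcompose (p ^ n) r = pcompose p r ^ n"
  by (induction n) (simp_all add: pcompose_mult pcompose_1)

lemma degree_pderiv_funpow:
  fixes p :: "'a::{comm_semiring_1,semiring_no_zero_divisors,semiring_char_0} poly"
  shows "degree ((pderiv ^^ m) p) = degree p - m"
  by (induction m) (simp_all add: degree_pderiv)

lemma pderiv_funpow_pcompose_linear:
  "(pderiv ^^ m) (pcompose p [:d, c:]) = smult (c ^ m) (pcompose ((pderiv ^^ m) p) [:d, c:])"
  by (induction m) (simp_all add: pderiv_pcompose pderiv_smult pderiv_pCons mult.commute)

lemma degree_legendre_poly: "degree (legendre_poly n) = n"
proof -
  have "degree ([:-1, 0, 1:] ^ n :: real poly) = 2 * n"
    by (simp add: degree_power_eq)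
  then show ?thesis
    by (simp add: legendre_poly_def degree_pderiv_funpow)
qed

definition shifted_legendre_poly :: "real \<Rightarrow> real \<Rightarrow> nat \<Rightarrow> real poly" where
  "shifted_legendre_poly a b n = pcompose (legendre_poly n) [:- (a + b) / (b - a), 2 / (b - a):]"

lemma poly_shifted_legendre_poly:
  assumes "a \<noteq> b"
  shows "poly (shifted_legendre_poly a b n) s = poly (legendre_poly n) (2 * (s - a) / (b - a) - 1)"
proof -
  have "b - a \<noteq> 0"
    using assms by simp
  then have "- (a + b) / (b - a) + s * (2 / (b - a)) = 2 * (s - a) / (b - a) - 1"
    by (simp add: divide_simps)
  then show ?thesis
    by (simp add: shifted_legendre_poly_def poly_pcompose)
qed

lemma degree_shifted_legendre_poly:
  assumes "a \<noteq> b"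
  shows "degree (shifted_legendre_poly a b n) = n"
  using assms by (simp add: shifted_legendre_poly_def degree_pcompose degree_legendre_poly)

text \<open>Rodrigues' formula survives the affine change of variables r up to a constant factor,
  with z = r^2 - 1 vanishing at both endpoints.\<close>
lemma shifted_legendre_poly_orthogonal:
  assumes "a < b" and "degree v < n"
  shows "integral {a..b} (poly (shifted_legendre_poly a b n * v)) = 0"
proof -
  define r :: "real poly" where "r = [:- (a + b) / (b - a), 2 / (b - a):]"
  define z where "z = pcompose [:-1, 0, 1:] r"
  have "b - a \<noteq> 0"
    using assms(1) by simp
  then have "poly r a = -1" "poly r b = 1"
    by (simp_all add: r_def divide_simps)
  then have "poly z a = 0" "poly z b = 0"
    by (simp_all add: z_def poly_pcompose)
  have "(pderiv ^^ n) (z ^ n) = smult ((2 / (b - a)) ^ n) (pcompose ((pderiv ^^ n) ([:-1, 0, 1:] ^ n)) r)"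
    unfolding z_def pcompose_power[symmetric] r_def by (rule pderiv_funpow_pcompose_linear)
  then have "shifted_legendre_poly a b n =
             smult (1 / (2 ^ n * fact n) / (2 / (b - a)) ^ n) ((pderiv ^^ n) (z ^ n))"
    using assms(1) by (simp add: shifted_legendre_poly_def legendre_poly_def pcompose_smult r_def)
  then show ?thesis
    using pderiv_funpow_power_orthogonal[OF _ \<open>poly z a = 0\<close> \<open>poly z b = 0\<close> order.refl assms(2)]
      assms(1) by (simp add: integral_poly_smult del: poly_mult)
qed

lemma orthogonal_lower_degree_poly_eq_shifted_legendre:
  fixes Q :: "real poly"
  assumes "a < b" and "n \<ge> 1" and "degree Q \<le> n"
    and "\<And>v. degree v < n \<Longrightarrow> integral {a..b} (poly (Q * v)) = 0"
  shows "\<exists>c. \<forall>s. poly Q s = c * poly (legendre_poly n) (2 * (s - a) / (b - a) - 1)"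
proof -
  have deg: "degree (shifted_legendre_poly a b n) = n"
    using assms(1) by (simp add: degree_shifted_legendre_poly)
  then have "shifted_legendre_poly a b n \<noteq> 0"
    using assms(2) by auto
  then have "\<exists>c. Q = smult c (shifted_legendre_poly a b n)"
    by (rule orthogonal_lower_degree_poly_eq_smult[OF assms(1)])
      (use deg assms(3,4) shifted_legendre_poly_orthogonal[OF assms(1)] in auto)
  then show ?thesis
    using assms(1) by (auto simp: poly_shifted_legendre_poly)
qed

lemma is_L2_poly_proj_orthogonal:
  assumes "is_L2_poly_proj a b n g r" and "degree v \<le> n"
    and "(\<lambda>s. g s * poly v s) integrable_on {a..b}"
    and "integral {a..b} (\<lambda>s. g s * poly v s) = 0"
  shows "integral {a..b} (poly (r * v)) = 0"
proof -
  have eq: "(\<lambda>s. (g s - poly r s) * poly v s) = (\<lambda>s. g s * poly v s - poly (r * v) s)"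
    by (simp add: algebra_simps)
  have "integral {a..b} (\<lambda>s. (g s - poly r s) * poly v s) = 0"
    using assms(1,2) by (simp add: is_L2_poly_proj_def)
  then have "0 = integral {a..b} (\<lambda>s. g s * poly v s - poly (r * v) s)"
    by (simp only: eq)
  also have "\<dots> = integral {a..b} (\<lambda>s. g s * poly v s) - integral {a..b} (poly (r * v))"
    by (rule integral_diff[OF assms(3) poly_integrable_on])
  finally show ?thesis
    using assms(4) by simp
qed

lemma deriv_mult_poly_integrable_on:
  fixes u :: "real \<Rightarrow> real"
  assumes "\<forall>s\<in>{a<..<b}. u s = poly p s"
  shows "(\<lambda>s. deriv u s * poly v s) integrable_on {a..b}"
proof (rule integrable_spike_finite[where S = "{a, b}", OF _ _ poly_integrable_on])
  show "deriv u s * poly v s = poly (pderiv p * v) s" if "s \<in> {a..b} - {a, b}" for s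
  proof -
    have "(u has_field_derivative poly (pderiv p) s) (at s)"
      by (rule has_field_derivative_transform_within_open[OF poly_DERIV, where S = "{a<..<b}"])
        (use that assms in auto)
    then show ?thesis
      by (simp add: DERIV_imp_deriv)
  qed
qed simp

lemma bounded_mult_poly_integrable_on:
  fixes F :: "real \<Rightarrow> real"
  assumes "F integrable_on {a..b}" and "\<forall>s\<in>{a<..b}. \<bar>F s\<bar> \<le> B"
  shows "(\<lambda>s. F s * poly v s) integrable_on {a..b}"
proof -
  have "F absolutely_integrable_on {a..b}"
  proof (rule measurable_bounded_by_integrable_imp_absolutely_integrable)
    show "F \<in> borel_measurable (lebesgue_on {a..b})"
      using assms(1) by (rule integrable_imp_measurable)
    show "(\<lambda>s. if s = a then \<bar>F a\<bar> else B) integrable_on {a..b}"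
      by (rule integrable_spike_finite[where S = "{a}" and f = "\<lambda>s. B"]) auto
    show "norm (F s) \<le> (if s = a then \<bar>F a\<bar> else B)" if "s \<in> {a..b}" for s
      using that assms(2) by auto
  qed simp
  moreover have "continuous_on {a..b} (poly v)"
    by (intro continuous_intros)
  ultimately have "(\<lambda>s. poly v s * F s) absolutely_integrable_on {a..b}"
    by (intro absolutely_integrable_bounded_measurable_product_real
        continuous_imp_measurable_on_sets_lebesgue compact_imp_bounded compact_continuous_image)
      auto
  then show ?thesis
    by (simp add: absolutely_integrable_on_def mult.commute)
qed

lemma galerkin_residual_orthogonal:
  fixes u F :: "real \<Rightarrow> real"
  assumes "\<forall>s\<in>{a<..<b}. u s = poly p s"
    and "F integrable_on {a..b}" and "\<forall>s\<in>{a<..b}. \<bar>F s\<bar> \<le> B"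
    and "integral {a..b} (\<lambda>s. deriv u s * poly v s) = integral {a..b} (\<lambda>s. F s * poly v s)"
  shows "(\<lambda>s. (deriv u s - F s) * poly v s) integrable_on {a..b}"
    and "integral {a..b} (\<lambda>s. (deriv u s - F s) * poly v s) = 0"
proof -
  have eq: "(\<lambda>s. (deriv u s - F s) * poly v s) = (\<lambda>s. deriv u s * poly v s - F s * poly v s)"
    by (simp add: left_diff_distrib)
  have Du: "(\<lambda>s. deriv u s * poly v s) integrable_on {a..b}"
    by (rule deriv_mult_poly_integrable_on[OF assms(1)])
  have Fv: "(\<lambda>s. F s * poly v s) integrable_on {a..b}"
    by (rule bounded_mult_poly_integrable_on[OF assms(2,3)])
  show "(\<lambda>s. (deriv u s - F s) * poly v s) integrable_on {a..b}"
    unfolding eq by (rule integrable_diff[OF Du Fv])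
  show "integral {a..b} (\<lambda>s. (deriv u s - F s) * poly v s) = 0"
    unfolding eq integral_diff[OF Du Fv] assms(4) by simp
qed

lemma partition_mono:
  fixes t :: "nat \<Rightarrow> real"
  assumes "\<And>j. 1 \<le> j \<Longrightarrow> j \<le> m \<Longrightarrow> t (j - 1) < t j" and "k \<le> l" and "l \<le> m"
  shows "t k \<le> t l"
proof (rule lift_Suc_mono_le_ivl[of "{..<m}"])
  show "t n \<le> t (Suc n)" if "n \<in> {..<m}" for n
    using that assms(1)[of "Suc n"] by simp
qed (use assms(2,3) in auto)

lemma L2_poly_proj_galerkin_residual_eq_shifted_legendre:
  fixes u F :: "real \<Rightarrow> real"
  assumes "a < b" and "n \<ge> 1"
    and "\<forall>s\<in>{a<..<b}. u s = poly p s"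
    and "F integrable_on {a..b}" and "\<forall>s\<in>{a<..b}. \<bar>F s\<bar> \<le> B"
    and galerkin: "\<And>v. degree v < n \<Longrightarrow>
      integral {a..b} (\<lambda>s. deriv u s * poly v s) = integral {a..b} (\<lambda>s. F s * poly v s)"
    and proj: "is_L2_poly_proj a b n (\<lambda>s. deriv u s - F s) R"
  shows "\<exists>c. \<forall>s. poly R s = c * poly (legendre_poly n) (2 * (s - a) / (b - a) - 1)"
proof (rule orthogonal_lower_degree_poly_eq_shifted_legendre[OF assms(1,2)])
  show "degree R \<le> n"
    using proj by (simp add: is_L2_poly_proj_def)
  show "integral {a..b} (poly (R * v)) = 0" if "degree v < n" for v
    using that galerkin_residual_orthogonal[OF assms(3-5) galerkin[OF that]]
    by (intro is_L2_poly_proj_orthogonal[OF proj]) simp_all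
qed

theorem lemma6p8:
  fixes f :: "real ^ 'n \<Rightarrow> real \<Rightarrow> real ^ 'n"
    and U :: "real \<Rightarrow> real ^ 'n"
    and u0 :: "real ^ 'n"
    and T :: real
    and M :: "'n \<Rightarrow> nat"
    and tp :: "'n \<Rightarrow> nat \<Rightarrow> real"
    and q :: "'n \<Rightarrow> nat \<Rightarrow> nat"
  assumes T_pos: "T > 0"
    and f_bounded: "\<exists>B. \<forall>u t. t \<in> {0<..T} \<longrightarrow> norm (f u t) \<le> B"
    and f_lipschitz: "\<exists>L. \<forall>u w t. t \<in> {0<..T} \<longrightarrow> norm (f u t - f w t) \<le> L * norm (u - w)"
    and M_pos: "\<And>i. M i \<ge> 1"
    and tp_start: "\<And>i. tp i 0 = 0"
    and tp_end: "\<And>i. tp i (M i) = T"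
    and tp_incr: "\<And>i j. 1 \<le> j \<Longrightarrow> j \<le> M i \<Longrightarrow> tp i (j - 1) < tp i j"
    and q_pos: "\<And>i j. 1 \<le> j \<Longrightarrow> j \<le> M i \<Longrightarrow> q i j \<ge> 1"
    and U_cont: "\<And>i. continuous_on {0..T} (\<lambda>s. U s $ i)"
    and U_init: "U 0 = u0"
    and U_piecewise_poly: "\<And>i j. 1 \<le> j \<Longrightarrow> j \<le> M i \<Longrightarrow>
          \<exists>p::real poly. degree p \<le> q i j \<and>
             (\<forall>s \<in> {tp i (j - 1)<..tp i j}. U s $ i = poly p s)"
    and f_integrable: "\<And>i j. 1 \<le> j \<Longrightarrow> j \<le> M i \<Longrightarrow>
          (\<lambda>s. f (U s) s $ i) integrable_on {tp i (j - 1)..tp i j}"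
    and galerkin: "\<And>i j v. 1 \<le> j \<Longrightarrow> j \<le> M i \<Longrightarrow> degree v \<le> q i j - 1 \<Longrightarrow>
          integral {tp i (j - 1)..tp i j} (\<lambda>s. deriv (\<lambda>r. U r $ i) s * poly v s)
          = integral {tp i (j - 1)..tp i j} (\<lambda>s. f (U s) s $ i * poly v s)"
  shows "\<forall>i j. 1 \<le> j \<and> j \<le> M i \<longrightarrow>
           (\<forall>Rt. is_L2_poly_proj (tp i (j - 1)) (tp i j) (q i j)
                   (\<lambda>s. deriv (\<lambda>r. U r $ i) s - f (U s) s $ i) Rt \<longrightarrow>
              (\<exists>c::real. \<forall>s. poly Rt s =
                 c * poly (legendre_poly (q i j))
                       (2 * (s - tp i (j - 1)) / (tp i j - tp i (j - 1)) - 1)))"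
proof (intro allI impI)
  fix i j R
  assume j: "1 \<le> j \<and> j \<le> M i"
    and proj: "is_L2_poly_proj (tp i (j - 1)) (tp i j) (q i j)
                 (\<lambda>s. deriv (\<lambda>r. U r $ i) s - f (U s) s $ i) R"
  have mono: "tp i k \<le> tp i l" if "k \<le> l" "l \<le> M i" for k l
    by (rule partition_mono[where t = "tp i", OF tp_incr that])
  have "tp i 0 \<le> tp i (j - 1)" and "tp i j \<le> tp i (M i)"
    using j by (auto intro: mono)
  then have "{tp i (j - 1)<..tp i j} \<subseteq> {0<..T}"
    using tp_start tp_end by fastforce
  moreover obtain B where "\<And>u t. t \<in> {0<..T} \<Longrightarrow> norm (f u t) \<le> B"
    using f_bounded by blast
  ultimately have "\<forall>s\<in>{tp i (j - 1)<..tp i j}. \<bar>f (U s) s $ i\<bar> \<le> B"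
    using component_le_norm_cart order_trans by (metis real_norm_def subsetD)
  moreover obtain p where "\<forall>s\<in>{tp i (j - 1)<..tp i j}. U s $ i = poly p s"
    using U_piecewise_poly[of j i] j by auto
  ultimately show "\<exists>c. \<forall>s. poly R s = c * poly (legendre_poly (q i j))
                     (2 * (s - tp i (j - 1)) / (tp i j - tp i (j - 1)) - 1)"
    by (intro L2_poly_proj_galerkin_residual_eq_shifted_legendre[OF tp_incr q_pos _ f_integrable _ _ proj])
      (use j galerkin[of j i] in auto)
qed

end
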